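(* Let $M \ge 1$ be a power of $2$ and let $\mathbf{a}, \mathbf{b} \in \mathbb{C}^{M}$ be such that the vector $\begin{bmatrix}\mathbf{a}\\ \mathbf{b}\end{bmatrix} \in \mathbb{C}^{2M}$ is nonzero. Suppose that $\begin{bmatrix}\mathbf{a}\\ \mathbf{b}\end{bmatrix}$ is an eigenvector of $\mathbf{T}_{4M,1}(\mathbf{h})$ for every $\mathbf{h} \in \mathbb{C}^{4M}$. Then for every $\mathbf{g} \in \mathbb{C}^{8M}$, both vectors $$\frac{1}{\sqrt{2}}\begin{bmatrix}\mathbf{a}\\ \mathbf{b}\\ \mathbf{b}\\ -\mathbf{a}\end{bmatrix} \quad\text{and}\quad \frac{1}{\sqrt{2}}\begin{bmatrix}\mathbf{a}\\ \mathbf{b}\\ -\mathbf{b}\\ \mathbf{a}\end{bmatrix} \in \mathbb{C}^{4M}$$ are eigenvectors of $\mathbf{T}_{8M,1}(\mathbf{g})$.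
   Context: For a complex matrix $A$, $A^*$ denotes its entrywise complex conjugate and $A^\dagger$ its conjugate transpose. For $K$ a power of $2$ and $\mathbf{h} = (h_1,\dots,h_{2K})^T \in \mathbb{C}^{2K}$, write $\mathbf{h}_{K,1} = (h_1,\dots,h_K)^T$ and $\mathbf{h}_{K,2} = (h_{K+1},\dots,h_{2K})^T$. The "equivalent channel" matrices $\mathcal{E}_{K,1}(\mathbf{h}), \mathcal{E}_{K,2}(\mathbf{h})$ (of size $K \times (K/2)$, for $\mathbf{h} \in \mathbb{C}^K$, $K \ge 2$ a power of $2$) are defined recursively by $$\mathcal{E}_{2,1}(h_1,h_2) = \begin{bmatrix} h_1 \\ h_2^* \end{bmatrix},\qquad \mathcal{E}_{2,2}(h_1,h_2) = \begin{bmatrix} h_2 \\ -h_1^* \end{bmatrix},$$ and, for $\mathbf{h} \in \mathbb{C}^{2K}$, $$\mathcal{E}_{2K,1}(\mathbf{h}) = \begin{bmatrix} \mathcal{E}_{K,1}(\mathbf{h}_{K,1}) & \mathcal{E}_{K,2}(\mathbf{h}_{K,2}) \\ \mathcal{E}_{K,1}^*(\mathbf{h}_{K,2}) & -\mathcal{E}_{K,2}^*(\mathbf{h}_{K,1}) \end{bmatrix},\qquad \mathcal{E}_{2K,2}(\mathbf{h}) = \begin{bmatrix} -\mathcal{E}_{K,2}(\mathbf{h}_{K,1}) & -\mathcal{E}_{K,1}(\mathbf{h}_{K,2}) \\ -\mathcal{E}_{K,2}^*(\mathbf{h}_{K,2}) & \mathcal{E}_{K,1}^*(\mathbf{h}_{K,1})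 \end{bmatrix}.$$ (These arise from the recursively defined linear space-time code $G_1[s]=s_1$, $G_{2K}[\mathbf{s}] = \begin{bmatrix} G_K[\mathbf{s}_{K,1}] & G_K[\mathbf{s}_{K,2}] \\ -G_K[\mathbf{s}_{K,2}^*] & G_K[\mathbf{s}_{K,1}^*]\end{bmatrix}$ by splitting the symbols into two partitions.) For $\mathbf{h} \in \mathbb{C}^K$ define the $(K/2)\times(K/2)$ Hermitian matrix $\mathbf{T}_{K,1}(\mathbf{h}) = \mathcal{E}_{K,1}^\dagger(\mathbf{h})\,\mathcal{E}_{K,1}(\mathbf{h})$. *)

theory Defs
  imports "Jordan_Normal_Form.Schur_Decomposition" "Jordan_Normal_Form.Char_Poly"
begin

text \<open>Equivalent channel matrices, indexed by level n, where K = 2^(n+1).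
  Elev n h = (E_{K,1}(h), E_{K,2}(h)) for h of length K.  Indices are 0-based.\<close>

fun Elev :: "nat \<Rightarrow> complex vec \<Rightarrow> complex mat \<times> complex mat" where
  "Elev 0 h =
     (mat_of_cols_list 2 [[h $ 0, cnj (h $ 1)]],
      mat_of_cols_list 2 [[h $ 1, - cnj (h $ 0)]])"
| "Elev (Suc n) h =
     (let K = 2 ^ (n + 1);
          h1 = vec K (\<lambda>i. h $ i);
          h2 = vec K (\<lambda>i. h $ (K + i));
          (A1, A2) = Elev n h1;
          (B1, B2) = Elev n h2
      in (four_block_mat A1 B2 (map_mat cnj B1) (- map_mat cnj A2),
          four_block_mat (- A2) (- B1) (- map_mat cnj B2) (map_mat cnj A1)))"

definition Ecal1 :: "nat \<Rightarrow> complex vec \<Rightarrow> complex mat" where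
  "Ecal1 K h = fst (Elev (THE n. K = 2 ^ (n + 1)) h)"

definition Ecal2 :: "nat \<Rightarrow> complex vec \<Rightarrow> complex mat" where
  "Ecal2 K h = snd (Elev (THE n. K = 2 ^ (n + 1)) h)"

definition T1 :: "nat \<Rightarrow> complex vec \<Rightarrow> complex mat" where
  "T1 K h = mat_adjoint (Ecal1 K h) * Ecal1 K h"

end

(*
  Write g = (g1; g2) and let J = [0, I; -I, 0] be the symplectic matrix, so J y = (y2; -y1).
  The recursion defining the equivalent channels yields E_{2K,2}(y) = -E_{2K,1}(J y) J and
  conj E_{2K,1}(y) = -J E_{2K,1}(J y), and hence the factorization
    E_{4K,1}(g) = diag(I, J) [P, -F; -F, P] diag(I, J),  P = E_{2K,1}(g1),  F = E_{2K,1}(J g2).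
  The outer factors are unitary, so T_{4K,1}(g) is unitarily similar to the Gram matrix of the
  block circulant in the middle.  That block circulant maps (v; t v), t = 1 or -1, to
  (G v; t G v) with G = P - t F = E_{2K,1}(g1 - t J g2) by real linearity of E_{2K,1}.  Hence
  an eigenvector v of every T_{2K,1}(h), used with h = g1 + s J g2, gives the eigenvector
  (v; s J v) = diag(I, J)^(-1) (v; -s v) of T_{4K,1}(g); for v = (a; b) this is
  (a; b; s b; -s a).
*)

theory Submission
  imports Defs
begin

section \<open>Adjoints and block matrices\<close>

abbreviation conj_mat :: "complex mat \<Rightarrow> complex mat" where
  "conj_mat A \<equiv> map_mat cnj A"

lemma mat_adjoint_eq_transpose_conj: "mat_adjoint A = transpose_mat (conj_mat A)"
  by (rule eq_matI) (auto simp: mat_adjoint_def mat_of_rows_def cols_def)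

lemma mat_adjoint_dim [simp]:
  "dim_row (mat_adjoint (A :: complex mat)) = dim_col A"
  "dim_col (mat_adjoint (A :: complex mat)) = dim_row A"
  by (simp_all add: mat_adjoint_eq_transpose_conj)

lemma mat_adjoint_carrier_mat_iff [simp]:
  "mat_adjoint (A :: complex mat) \<in> carrier_mat n k \<longleftrightarrow> A \<in> carrier_mat k n"
  unfolding carrier_mat_def by auto

lemma mat_adjoint_one [simp]: "mat_adjoint (1\<^sub>m n :: complex mat) = 1\<^sub>m n"
  by (rule eq_matI) (auto simp: mat_adjoint_eq_transpose_conj)

lemma mat_adjoint_zero [simp]: "mat_adjoint (0\<^sub>m m n :: complex mat) = 0\<^sub>m n m"
  by (rule eq_matI) (auto simp: mat_adjoint_eq_transpose_conj)

lemma conj_mat_conj_mat [simp]: "conj_mat (conj_mat A) = A"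
  by (rule eq_matI) auto

lemma conj_mat_uminus: "conj_mat (- A) = - conj_mat A"
  by (rule eq_matI) auto

lemma conj_mat_mult:
  "A \<in> carrier_mat n k \<Longrightarrow> B \<in> carrier_mat k l \<Longrightarrow> conj_mat (A * B) = conj_mat A * conj_mat B"
  by (rule eq_matI) (auto simp: scalar_prod_def)

lemma mat_adjoint_mult:
  "A \<in> carrier_mat n k \<Longrightarrow> B \<in> carrier_mat k l \<Longrightarrow>
   mat_adjoint (A * B) = mat_adjoint B * mat_adjoint (A :: complex mat)"
  by (simp add: mat_adjoint_eq_transpose_conj conj_mat_mult transpose_mult[of _ n k _ l])

lemma mat_adjoint_add:
  "A \<in> carrier_mat n k \<Longrightarrow> B \<in> carrier_mat n k \<Longrightarrow>
   mat_adjoint (A + B) = mat_adjoint A + mat_adjoint (B :: complex mat)"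
  by (rule eq_matI) (auto simp: mat_adjoint_eq_transpose_conj)

lemma mat_adjoint_smult: "mat_adjoint (c \<cdot>\<^sub>m A) = cnj c \<cdot>\<^sub>m mat_adjoint A"
  by (rule eq_matI) (auto simp: mat_adjoint_eq_transpose_conj)

lemma uminus_four_block_mat:
  assumes "dim_row B = dim_row A" "dim_col C = dim_col A"
    and "dim_row C = dim_row D" "dim_col B = dim_col D"
  shows "- four_block_mat A B C D = four_block_mat (- A) (- B) (- C) (- D :: 'a :: ring mat)"
  by (rule eq_matI) (use assms in auto)

lemma conj_four_block_mat:
  assumes "dim_row B = dim_row A" "dim_col C = dim_col A"
    and "dim_row C = dim_row D" "dim_col B = dim_col D"
  shows "conj_mat (four_block_mat A B C D) =
    four_block_mat (conj_mat A) (conj_mat B) (conj_mat C) (conj_mat D)"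
  by (rule eq_matI) (use assms in auto)

lemma mat_adjoint_four_block_mat:
  "A \<in> carrier_mat nr1 nc1 \<Longrightarrow> B \<in> carrier_mat nr1 nc2 \<Longrightarrow>
   C \<in> carrier_mat nr2 nc1 \<Longrightarrow> D \<in> carrier_mat nr2 nc2 \<Longrightarrow>
   mat_adjoint (four_block_mat A B C D) =
     four_block_mat (mat_adjoint A) (mat_adjoint C) (mat_adjoint B)
       (mat_adjoint (D :: complex mat))"
  by (rule eq_matI) (auto simp: mat_adjoint_eq_transpose_conj)

lemma smult_mat_mult_vec:
  "v \<in> carrier_vec (dim_col A) \<Longrightarrow> (c \<cdot>\<^sub>m A) *\<^sub>v v = c \<cdot>\<^sub>v (A *\<^sub>v v :: 'a :: comm_ring vec)"
  by (rule eq_vecI) (auto simp: scalar_prod_def sum_distrib_left mult.assoc intro!: sum.cong)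

lemma smult_append_vec: "c \<cdot>\<^sub>v (x @\<^sub>v y) = c \<cdot>\<^sub>v x @\<^sub>v c \<cdot>\<^sub>v (y :: 'a :: ring vec)"
  by (rule eq_vecI) auto

lemma append_vec_assoc: "(x @\<^sub>v y) @\<^sub>v z = x @\<^sub>v y @\<^sub>v z"
  by (rule eq_vecI) auto

lemma append_vec_nonzero:
  assumes "v \<in> carrier_vec n" "v \<noteq> 0\<^sub>v n" "x \<in> carrier_vec m"
  shows "v @\<^sub>v x \<noteq> 0\<^sub>v (n + m)"
proof
  assume "v @\<^sub>v x = 0\<^sub>v (n + m)"
  also have "0\<^sub>v (n + m) = 0\<^sub>v n @\<^sub>v (0\<^sub>v m :: 'a vec)" by (rule eq_vecI) auto
  finally show False using assms by simp
qed

lemma eigenvector_smult: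
  fixes A :: "'a :: field mat"
  assumes A: "A \<in> carrier_mat n n" and eig: "eigenvector A w c" and k: "k \<noteq> 0"
  shows "eigenvector A (k \<cdot>\<^sub>v w) c"
proof -
  have w: "w \<in> carrier_vec n" and w0: "w \<noteq> 0\<^sub>v n" and Aw: "A *\<^sub>v w = c \<cdot>\<^sub>v w"
    using eig A unfolding eigenvector_def by auto
  have "k \<cdot>\<^sub>v w \<noteq> 0\<^sub>v n"
  proof
    assume "k \<cdot>\<^sub>v w = 0\<^sub>v n"
    then have "inverse k \<cdot>\<^sub>v (k \<cdot>\<^sub>v w) = inverse k \<cdot>\<^sub>v 0\<^sub>v n" by simp
    also have "\<dots> = 0\<^sub>v n" by (rule eq_vecI) auto
    finally show False using k w0 by (simp add: smult_smult_assoc)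
  qed
  moreover have "A *\<^sub>v (k \<cdot>\<^sub>v w) = c \<cdot>\<^sub>v (k \<cdot>\<^sub>v w)"
    by (simp add: mult_mat_vec[OF A w] Aw smult_smult_assoc mult.commute)
  ultimately show ?thesis
    unfolding eigenvector_def using A w by simp
qed

lemma diag_block_one_mat:
  "diag_block_mat [1\<^sub>m m, U] = four_block_mat (1\<^sub>m m) (0\<^sub>m m (dim_col U)) (0\<^sub>m (dim_row U) m) U"
  by (subst diag_block_mat.simps(2)[of "1\<^sub>m m"])
    (simp only: diag_block_mat_singleton Let_def index_one_mat)

lemma diag_block_one_carrier:
  "U \<in> carrier_mat n n \<Longrightarrow> diag_block_mat [1\<^sub>m m, U] \<in> carrier_mat (m + n) (m + n)"
  unfolding diag_block_one_mat by auto

lemma diag_block_one_mult_vec: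
  fixes U :: "'a :: semiring_1 mat"
  assumes "U \<in> carrier_mat n n" "x \<in> carrier_vec m" "y \<in> carrier_vec n"
  shows "diag_block_mat [1\<^sub>m m, U] *\<^sub>v (x @\<^sub>v y) = x @\<^sub>v U *\<^sub>v y"
  using assms unfolding diag_block_one_mat by (simp add: mult_mat_vec_split[OF one_carrier_mat])

lemma diag_block_one_unitary:
  fixes U :: "complex mat"
  assumes U: "U \<in> carrier_mat n n" "mat_adjoint U * U = 1\<^sub>m n"
  shows "mat_adjoint (diag_block_mat [1\<^sub>m m, U]) * diag_block_mat [1\<^sub>m m, U] = 1\<^sub>m (m + n)"
proof -
  have aU: "mat_adjoint U \<in> carrier_mat n n" using U(1) by simp
  show ?thesis
    using U unfolding diag_block_one_mat
    by (simp add: mat_adjoint_four_block_mat[OF one_carrier_mat zero_carrier_mat zero_carrier_mat U(1)]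
      mult_four_block_mat[OF one_carrier_mat zero_carrier_mat zero_carrier_mat aU
        one_carrier_mat zero_carrier_mat zero_carrier_mat U(1)])
qed

lemma diag_block_mult_four_block_mult_diag_block:
  fixes A B C D U V :: "'a :: semiring_1 mat"
  assumes A: "A \<in> carrier_mat m1 n1" and B: "B \<in> carrier_mat m1 n2"
    and C: "C \<in> carrier_mat m2 n1" and D: "D \<in> carrier_mat m2 n2"
    and U: "U \<in> carrier_mat m2 m2" and V: "V \<in> carrier_mat n2 n2"
  shows "diag_block_mat [1\<^sub>m m1, U] * four_block_mat A B C D * diag_block_mat [1\<^sub>m n1, V] =
    four_block_mat A (B * V) (U * C) (U * D * V)"
proof -
  have "diag_block_mat [1\<^sub>m m1, U] * four_block_mat A B C D = four_block_mat A B (U * C) (U * D)"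
    using A B C D U unfolding diag_block_one_mat
    by (simp add: left_mult_one_mat[OF A] left_mult_one_mat[OF B]
      mult_four_block_mat[OF one_carrier_mat zero_carrier_mat zero_carrier_mat U A B C D])
  moreover have "four_block_mat A B (U * C) (U * D) * diag_block_mat [1\<^sub>m n1, V] =
      four_block_mat A (B * V) (U * C) (U * D * V)"
    using A B C D U V unfolding diag_block_one_mat
    by (simp add: mult_four_block_mat[OF A B mult_carrier_mat[OF U C] mult_carrier_mat[OF U D]
      one_carrier_mat zero_carrier_mat zero_carrier_mat V])
  ultimately show ?thesis by simp
qed

lemma gram_unitary_mult_eigen:
  fixes U X V :: "complex mat"
  assumes U: "U \<in> carrier_mat m m" "mat_adjoint U * U = 1\<^sub>m m"
    and V: "V \<in> carrier_mat n n" "mat_adjoint V * V = 1\<^sub>m n"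
    and X: "X \<in> carrier_mat m n" and w: "w \<in> carrier_vec n"
    and eig: "(mat_adjoint X * X) *\<^sub>v (V *\<^sub>v w) = c \<cdot>\<^sub>v (V *\<^sub>v w)"
  shows "(mat_adjoint (U * X * V) * (U * X * V)) *\<^sub>v w = c \<cdot>\<^sub>v w"
proof -
  have aU: "mat_adjoint U \<in> carrier_mat m m" and aX: "mat_adjoint X \<in> carrier_mat n m"
    and aV: "mat_adjoint V \<in> carrier_mat n n"
    using U X V by simp_all
  have adj: "mat_adjoint (U * X * V) = mat_adjoint V * mat_adjoint X * mat_adjoint U"
    using U X V aU aX aV
    by (simp add: mat_adjoint_mult[of _ m n _ n] mat_adjoint_mult[of _ m m _ n] assoc_mult_mat)
  have UU: "mat_adjoint U *\<^sub>v (U *\<^sub>v y) = y" if "y \<in> carrier_vec m" for y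
    using U aU that by (simp flip: assoc_mult_mat_vec)
  have VV: "mat_adjoint V *\<^sub>v (V *\<^sub>v y) = y" if "y \<in> carrier_vec n" for y
    using V aV that by (simp flip: assoc_mult_mat_vec)
  have UX: "U * X \<in> carrier_mat m n" and UXV: "U * X * V \<in> carrier_mat m n"
    and aVX: "mat_adjoint V * mat_adjoint X \<in> carrier_mat n m"
    using U X V aX aV by auto
  have "(mat_adjoint (U * X * V) * (U * X * V)) *\<^sub>v w =
      mat_adjoint (U * X * V) *\<^sub>v ((U * X * V) *\<^sub>v w)"
    using UXV w by (simp add: assoc_mult_mat_vec[of _ n m])
  also have "\<dots> = mat_adjoint V *\<^sub>v (mat_adjoint X *\<^sub>v (mat_adjoint U *\<^sub>v (U *\<^sub>v (X *\<^sub>v (V *\<^sub>v w)))))"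
    unfolding adj
    using assoc_mult_mat_vec[OF UX V(1) w] assoc_mult_mat_vec[OF U(1) X]
      assoc_mult_mat_vec[OF aVX aU] assoc_mult_mat_vec[OF aV aX] V X w U
    by simp
  also have "\<dots> = mat_adjoint V *\<^sub>v ((mat_adjoint X * X) *\<^sub>v (V *\<^sub>v w))"
    using UU X V aX w by simp
  also have "\<dots> = c \<cdot>\<^sub>v w"
    unfolding eig using aV V w VV by (simp add: mult_mat_vec[OF aV])
  finally show ?thesis .
qed

lemma block_circulant_mult_vec:
  fixes A B :: "'a :: field mat"
  assumes A: "A \<in> carrier_mat r k" and B: "B \<in> carrier_mat r k" and x: "x \<in> carrier_vec k"
    and t: "t * t = 1"
  shows "four_block_mat A B B A *\<^sub>v (x @\<^sub>v t \<cdot>\<^sub>v x) =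
    (A + t \<cdot>\<^sub>m B) *\<^sub>v x @\<^sub>v t \<cdot>\<^sub>v ((A + t \<cdot>\<^sub>m B) *\<^sub>v x)"
proof -
  have Ax: "A *\<^sub>v x \<in> carrier_vec r" and Bx: "B *\<^sub>v x \<in> carrier_vec r"
    using A B x by auto
  have "b + t \<cdot>\<^sub>v a = t \<cdot>\<^sub>v (a + t \<cdot>\<^sub>v b)" if "a \<in> carrier_vec r" "b \<in> carrier_vec r" for a b
    by (rule eq_vecI) (use that t in \<open>auto simp: algebra_simps mult.assoc[symmetric]\<close>)
  then have "B *\<^sub>v x + t \<cdot>\<^sub>v (A *\<^sub>v x) = t \<cdot>\<^sub>v (A *\<^sub>v x + t \<cdot>\<^sub>v (B *\<^sub>v x))"
    using Ax Bx by blast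
  moreover have "(A + t \<cdot>\<^sub>m B) *\<^sub>v x = A *\<^sub>v x + t \<cdot>\<^sub>v (B *\<^sub>v x)"
    using A B x by (simp add: add_mult_distrib_mat_vec[of _ r k] smult_mat_mult_vec)
  ultimately show ?thesis
    using A B x
    by (simp add: four_block_mat_mult_vec[OF A B B A] mult_mat_vec[OF A] mult_mat_vec[OF B])
qed

lemma block_circulant_gram_eigen:
  fixes P Q :: "complex mat"
  assumes P: "P \<in> carrier_mat r k" and Q: "Q \<in> carrier_mat r k" and v: "v \<in> carrier_vec k"
    and t: "t \<in> {1, -1}"
    and eig: "(mat_adjoint (P + t \<cdot>\<^sub>m Q) * (P + t \<cdot>\<^sub>m Q)) *\<^sub>v v = c \<cdot>\<^sub>v v"
  shows "(mat_adjoint (four_block_mat P Q Q P) * four_block_mat P Q Q P) *\<^sub>v (v @\<^sub>v t \<cdot>\<^sub>v v) =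
    c \<cdot>\<^sub>v (v @\<^sub>v t \<cdot>\<^sub>v v)"
proof -
  let ?G = "P + t \<cdot>\<^sub>m Q" and ?X = "four_block_mat P Q Q P"
  have tt: "t * t = 1" and t_real: "cnj t = t" using t by auto
  have G: "?G \<in> carrier_mat r k" using P Q by simp
  have X: "?X \<in> carrier_mat (r + r) (k + k)" using P Q by simp
  have adj_X: "mat_adjoint ?X =
      four_block_mat (mat_adjoint P) (mat_adjoint Q) (mat_adjoint Q) (mat_adjoint P)"
    by (rule mat_adjoint_four_block_mat[OF P Q Q P])
  have adj_G: "mat_adjoint ?G = mat_adjoint P + t \<cdot>\<^sub>m mat_adjoint Q"
    using P Q t_real by (simp add: mat_adjoint_add[of _ r k] mat_adjoint_smult)
  have "(mat_adjoint ?X * ?X) *\<^sub>v (v @\<^sub>v t \<cdot>\<^sub>v v) = mat_adjoint ?X *\<^sub>v (?X *\<^sub>v (v @\<^sub>v t \<cdot>\<^sub>v v))"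
    using X v by (simp add: assoc_mult_mat_vec[of _ "k + k" "r + r"])
  also have "\<dots> = mat_adjoint ?G *\<^sub>v (?G *\<^sub>v v) @\<^sub>v t \<cdot>\<^sub>v (mat_adjoint ?G *\<^sub>v (?G *\<^sub>v v))"
    unfolding block_circulant_mult_vec[OF P Q v tt] adj_X adj_G
    using block_circulant_mult_vec[OF mat_adjoint_carrier_mat_iff[THEN iffD2, OF P]
        mat_adjoint_carrier_mat_iff[THEN iffD2, OF Q] _ tt] G v
    by simp
  also have "\<dots> = c \<cdot>\<^sub>v (v @\<^sub>v t \<cdot>\<^sub>v v)"
    using eig G v by (simp add: smult_append_vec smult_smult_assoc mult.commute)
  finally show ?thesis .
qed

section \<open>The symplectic matrix\<close>

definition symplectic_mat :: "nat \<Rightarrow> 'a :: ring_1 mat" where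
  "symplectic_mat k = four_block_mat (0\<^sub>m k k) (1\<^sub>m k) (- 1\<^sub>m k) (0\<^sub>m k k)"

lemma symplectic_mat_carrier [simp]: "symplectic_mat k \<in> carrier_mat (2 * k) (2 * k)"
  unfolding symplectic_mat_def mult_2 by (rule four_block_carrier_mat) simp_all

lemma symplectic_mat_dim [simp]:
  "dim_row (symplectic_mat k) = 2 * k" "dim_col (symplectic_mat k) = 2 * k"
  by (simp_all add: symplectic_mat_def)

lemma symplectic_mat_mult_four_block_mat:
  assumes "dim_row A = k" "dim_row B = k" "dim_row C = k" "dim_row D = k"
    "dim_col C = dim_col A" "dim_col D = dim_col B"
  shows "symplectic_mat k * four_block_mat A B C D =
    four_block_mat C D (- A) (- B :: 'a :: ring_1 mat)"
proof -
  have c: "A \<in> carrier_mat k (dim_col A)" "B \<in> carrier_mat k (dim_col B)"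
    "C \<in> carrier_mat k (dim_col A)" "D \<in> carrier_mat k (dim_col B)"
    using assms by auto
  show ?thesis
    unfolding symplectic_mat_def
    by (subst mult_four_block_mat[OF zero_carrier_mat one_carrier_mat
          uminus_carrier_mat[OF one_carrier_mat] zero_carrier_mat c])
      (simp only: left_mult_zero_mat[OF c(1)] left_mult_zero_mat[OF c(2)]
        left_mult_zero_mat[OF c(3)] left_mult_zero_mat[OF c(4)] uminus_mult_left_mat
        left_mult_one_mat[OF c(1)] left_mult_one_mat[OF c(2)]
        left_mult_one_mat[OF c(3)] left_mult_one_mat[OF c(4)]
        left_add_zero_mat[OF c(3)] left_add_zero_mat[OF c(4)]
        right_add_zero_mat[OF uminus_carrier_mat[OF c(1)]]
        right_add_zero_mat[OF uminus_carrier_mat[OF c(2)]] index_one_mat assms)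
qed

lemma four_block_mat_mult_symplectic_mat:
  assumes "dim_col A = k" "dim_col B = k" "dim_col C = k" "dim_col D = k"
    "dim_row B = dim_row A" "dim_row D = dim_row C"
  shows "four_block_mat A B C D * symplectic_mat k =
    four_block_mat (- B) A (- D) (C :: 'a :: ring_1 mat)"
proof -
  have c: "A \<in> carrier_mat (dim_row A) k" "B \<in> carrier_mat (dim_row A) k"
    "C \<in> carrier_mat (dim_row C) k" "D \<in> carrier_mat (dim_row C) k"
    using assms by auto
  show ?thesis
    unfolding symplectic_mat_def
    by (subst mult_four_block_mat[OF c zero_carrier_mat one_carrier_mat
          uminus_carrier_mat[OF one_carrier_mat] zero_carrier_mat])
      (simp only: right_mult_zero_mat[OF c(1)] right_mult_zero_mat[OF c(2)]
        right_mult_zero_mat[OF c(3)] right_mult_zero_mat[OF c(4)] uminus_mult_right_mat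
        right_mult_one_mat[OF c(1)] right_mult_one_mat[OF c(2)]
        right_mult_one_mat[OF c(3)] right_mult_one_mat[OF c(4)]
        left_add_zero_mat[OF uminus_carrier_mat[OF c(2)]]
        left_add_zero_mat[OF uminus_carrier_mat[OF c(4)]]
        right_add_zero_mat[OF c(1)] right_add_zero_mat[OF c(3)] index_one_mat assms)
qed

lemma symplectic_mat_mult_vec:
  "x \<in> carrier_vec k \<Longrightarrow> y \<in> carrier_vec k \<Longrightarrow> symplectic_mat k *\<^sub>v (x @\<^sub>v y) = y @\<^sub>v - x"
  unfolding symplectic_mat_def
  by (subst four_block_mat_mult_vec[OF zero_carrier_mat one_carrier_mat
        uminus_carrier_mat[OF one_carrier_mat] zero_carrier_mat]) auto

lemma mat_adjoint_symplectic_mat: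
  "mat_adjoint (symplectic_mat k) = - (symplectic_mat k :: complex mat)"
  unfolding symplectic_mat_def by (rule eq_matI) (auto simp: mat_adjoint_eq_transpose_conj)

lemma conj_symplectic_mat [simp]: "conj_mat (symplectic_mat k) = symplectic_mat k"
  unfolding symplectic_mat_def by (rule eq_matI) auto

lemma symplectic_mat_square:
  "symplectic_mat k * symplectic_mat k = - (1\<^sub>m (2 * k) :: 'a :: ring_1 mat)"
proof -
  have "symplectic_mat k * symplectic_mat k =
    four_block_mat (- 1\<^sub>m k) (0\<^sub>m k k) (- 0\<^sub>m k k) (- 1\<^sub>m k :: 'a mat)"
    by (subst (2) symplectic_mat_def, rule symplectic_mat_mult_four_block_mat) auto
  also have "\<dots> = - 1\<^sub>m (2 * k)"
    by (rule eq_matI) auto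
  finally show ?thesis .
qed

lemma symplectic_mat_unitary:
  "mat_adjoint (symplectic_mat k) * symplectic_mat k = (1\<^sub>m (2 * k) :: complex mat)"
  by (simp add: mat_adjoint_symplectic_mat symplectic_mat_square)

lemma diag_block_symplectic_mult_vec:
  assumes v: "v \<in> carrier_vec (2 * k)"
  shows "diag_block_mat [1\<^sub>m (2 * k), symplectic_mat k] *\<^sub>v
      (v @\<^sub>v s \<cdot>\<^sub>v (symplectic_mat k *\<^sub>v v)) = v @\<^sub>v (- s) \<cdot>\<^sub>v (v :: 'a :: field vec)"
proof -
  let ?J = "symplectic_mat k :: 'a mat"
  have J: "?J \<in> carrier_mat (2 * k) (2 * k)" by simp
  have Jv: "?J *\<^sub>v v \<in> carrier_vec (2 * k)" using mult_mat_vec_carrier[OF J v] .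
  have "diag_block_mat [1\<^sub>m (2 * k), ?J] *\<^sub>v (v @\<^sub>v s \<cdot>\<^sub>v (?J *\<^sub>v v)) =
      v @\<^sub>v ?J *\<^sub>v (s \<cdot>\<^sub>v (?J *\<^sub>v v))"
    by (rule diag_block_one_mult_vec[OF J v]) (use Jv in simp)
  also have "?J *\<^sub>v (s \<cdot>\<^sub>v (?J *\<^sub>v v)) = s \<cdot>\<^sub>v ((?J * ?J) *\<^sub>v v)"
    using mult_mat_vec[OF J Jv] assoc_mult_mat_vec[OF J J v] by simp
  also have "\<dots> = (- s) \<cdot>\<^sub>v v"
    unfolding symplectic_mat_square by (rule eq_vecI) (use v in auto)
  finally show ?thesis .
qed

definition first_half :: "nat \<Rightarrow> 'a vec \<Rightarrow> 'a vec" where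
  "first_half k h = vec k (\<lambda>i. h $ i)"

definition second_half :: "nat \<Rightarrow> 'a vec \<Rightarrow> 'a vec" where
  "second_half k h = vec k (\<lambda>i. h $ (k + i))"

lemma first_half_carrier [simp]: "first_half k h \<in> carrier_vec k"
  by (simp add: first_half_def)

lemma second_half_carrier [simp]: "second_half k h \<in> carrier_vec k"
  by (simp add: second_half_def)

(* J y for J = symplectic_mat k, computed blockwise *)
definition quarter_turn :: "nat \<Rightarrow> 'a :: ring_1 vec \<Rightarrow> 'a vec" where
  "quarter_turn k y = second_half k y @\<^sub>v - first_half k y"

lemma quarter_turn_carrier [simp]: "quarter_turn k y \<in> carrier_vec (2 * k)"
  by (simp add: quarter_turn_def mult_2)

lemma first_half_quarter_turn: "first_half k (quarter_turn k y) = second_half k y"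
  by (rule eq_vecI) (auto simp: quarter_turn_def first_half_def second_half_def)

lemma second_half_quarter_turn: "second_half k (quarter_turn k y) = - first_half k y"
  by (rule eq_vecI) (auto simp: quarter_turn_def first_half_def second_half_def)

section \<open>Equivalent channels\<close>

definition E1 :: "nat \<Rightarrow> complex vec \<Rightarrow> complex mat"
  where "E1 n h = fst (Elev n h)"

definition E2 :: "nat \<Rightarrow> complex vec \<Rightarrow> complex mat"
  where "E2 n h = snd (Elev n h)"

lemma E1_0: "E1 0 h = mat_of_cols_list 2 [[h $ 0, cnj (h $ 1)]]"
  and E2_0: "E2 0 h = mat_of_cols_list 2 [[h $ 1, - cnj (h $ 0)]]"
  by (simp_all only: E1_def E2_def Elev.simps fst_conv snd_conv)

lemma E1_Suc:
  "K = 2 ^ (n + 1) \<Longrightarrow> E1 (Suc n) h =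
     four_block_mat (E1 n (first_half K h)) (E2 n (second_half K h))
       (conj_mat (E1 n (second_half K h))) (- conj_mat (E2 n (first_half K h)))"
  by (simp add: E1_def E2_def first_half_def second_half_def Let_def case_prod_beta)

lemma E2_Suc:
  "K = 2 ^ (n + 1) \<Longrightarrow> E2 (Suc n) h =
     four_block_mat (- E2 n (first_half K h)) (- E1 n (second_half K h))
       (- conj_mat (E2 n (second_half K h))) (conj_mat (E1 n (first_half K h)))"
  by (simp add: E1_def E2_def first_half_def second_half_def Let_def case_prod_beta)

lemma E1_E2_carrier:
  "E1 n h \<in> carrier_mat (2 ^ (n + 1)) (2 ^ n) \<and> E2 n h \<in> carrier_mat (2 ^ (n + 1)) (2 ^ n)"
proof (induction n arbitrary: h)
  case 0
  show ?case
    unfolding E1_0 E2_0 mat_of_cols_list_def carrier_mat_def by simp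
next
  case (Suc n)
  have dims: "(2::nat) ^ (Suc n + 1) = 2 ^ (n + 1) + 2 ^ (n + 1)"
    "(2::nat) ^ Suc n = 2 ^ n + 2 ^ n"
    by simp_all
  show ?case
    unfolding E1_Suc[OF refl] E2_Suc[OF refl] dims
    by (intro conjI four_block_carrier_mat) (use Suc.IH in auto)
qed

lemma E1_carrier [simp]: "E1 n h \<in> carrier_mat (2 ^ (n + 1)) (2 ^ n)"
  and E2_carrier [simp]: "E2 n h \<in> carrier_mat (2 ^ (n + 1)) (2 ^ n)"
  using E1_E2_carrier by blast+

lemma E1_E2_dim [simp]:
  "dim_row (E1 n h) = 2 ^ (n + 1)" "dim_col (E1 n h) = 2 ^ n"
  "dim_row (E2 n h) = 2 ^ (n + 1)" "dim_col (E2 n h) = 2 ^ n"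
  using E1_carrier[of n h] E2_carrier[of n h] by auto

lemma E1_E2_real_linear:
  assumes c: "c \<in> \<real>" and "x \<in> carrier_vec (2 ^ (n + 1))" "y \<in> carrier_vec (2 ^ (n + 1))"
  shows "E1 n (x + c \<cdot>\<^sub>v y) = E1 n x + c \<cdot>\<^sub>m E1 n y \<and> E2 n (x + c \<cdot>\<^sub>v y) = E2 n x + c \<cdot>\<^sub>m E2 n y"
  using assms(2,3)
proof (induction n arbitrary: x y)
  case 0
  then have "dim_vec x = 2" "dim_vec y = 2" by auto
  with c show ?case
    unfolding E1_0 E2_0 mat_of_cols_list_def Reals_cnj_iff
    by (auto intro!: eq_matI simp: less_2_cases_iff)
next
  case (Suc n)
  let ?K = "2 ^ (n + 1) :: nat"
  have halves: "first_half ?K (x + c \<cdot>\<^sub>v y) = first_half ?K x + c \<cdot>\<^sub>v first_half ?K y"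
    "second_half ?K (x + c \<cdot>\<^sub>v y) = second_half ?K x + c \<cdot>\<^sub>v second_half ?K y"
    using Suc.prems by (auto simp: first_half_def second_half_def)
  note IH = Suc.IH[OF first_half_carrier first_half_carrier]
    Suc.IH[OF second_half_carrier second_half_carrier]
  from c show ?case
    unfolding E1_Suc[OF refl] E2_Suc[OF refl] halves IH[THEN conjunct1] IH[THEN conjunct2]
      Reals_cnj_iff
    by (auto intro!: eq_matI)
qed

lemma E1_E2_uminus:
  "x \<in> carrier_vec (2 ^ (n + 1)) \<Longrightarrow> E1 n (- x) = - E1 n x \<and> E2 n (- x) = - E2 n x"
proof (induction n arbitrary: x)
  case 0
  then have "dim_vec x = 2" by auto
  then show ?case
    unfolding E1_0 E2_0 mat_of_cols_list_def by (auto intro!: eq_matI simp: less_2_cases_iff)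
next
  case (Suc n)
  let ?K = "2 ^ (n + 1) :: nat"
  have halves: "first_half ?K (- x) = - first_half ?K x"
    "second_half ?K (- x) = - second_half ?K x"
    using Suc.prems by (auto simp: first_half_def second_half_def)
  note IH = Suc.IH[OF first_half_carrier] Suc.IH[OF second_half_carrier]
  show ?case
    unfolding E1_Suc[OF refl] E2_Suc[OF refl] halves IH[THEN conjunct1] IH[THEN conjunct2]
    by (auto intro!: eq_matI)
qed

lemma E1_uminus_first_half:
    "K = 2 ^ (n + 1) \<Longrightarrow> E1 n (- first_half K y) = - E1 n (first_half K y)"
  and E2_uminus_first_half:
    "K = 2 ^ (n + 1) \<Longrightarrow> E2 n (- first_half K y) = - E2 n (first_half K y)"
  using E1_E2_uminus[of "first_half K y" n] by simp_all

lemma E2_Suc_eq_E1_quarter_turn: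
  assumes K: "K = 2 ^ (n + 1)"
  shows "E2 (Suc n) y = - (E1 (Suc n) (quarter_turn K y) * symplectic_mat (2 ^ n))"
  unfolding E1_Suc[OF K] E2_Suc[OF K] first_half_quarter_turn second_half_quarter_turn
    E1_uminus_first_half[OF K] E2_uminus_first_half[OF K]
  by (subst four_block_mat_mult_symplectic_mat, simp_all,
      subst uminus_four_block_mat, simp_all add: conj_mat_uminus)

lemma conj_E1_Suc:
  assumes K: "K = 2 ^ (n + 1)"
  shows "conj_mat (E1 (Suc n) y) = - (symplectic_mat K * E1 (Suc n) (quarter_turn K y))"
  unfolding E1_Suc[OF K] first_half_quarter_turn second_half_quarter_turn
    E1_uminus_first_half[OF K] E2_uminus_first_half[OF K]
  by (subst symplectic_mat_mult_four_block_mat, simp_all add: K,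
      subst uminus_four_block_mat, simp_all,
      subst conj_four_block_mat, simp_all add: conj_mat_uminus)

lemma conj_E1_Suc_quarter_turn:
  assumes K: "K = 2 ^ (n + 1)"
  shows "conj_mat (E1 (Suc n) (quarter_turn K y)) = symplectic_mat K * E1 (Suc n) y"
  unfolding E1_Suc[OF K] first_half_quarter_turn second_half_quarter_turn
    E1_uminus_first_half[OF K] E2_uminus_first_half[OF K]
  by (subst symplectic_mat_mult_four_block_mat, simp_all add: K,
      subst conj_four_block_mat, simp_all add: conj_mat_uminus)

lemma E1_Suc_Suc_factorization:
  assumes K: "K = 2 ^ (n + 1)"
    and P: "P = E1 (Suc n) (first_half (2 * K) g)"
    and F: "F = E1 (Suc n) (quarter_turn K (second_half (2 * K) g))"
  shows "E1 (Suc (Suc n)) g =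
    diag_block_mat [1\<^sub>m (2 * K), symplectic_mat K] * four_block_mat P (- F) (- F) P *
    diag_block_mat [1\<^sub>m K, symplectic_mat (2 ^ n)]"
proof -
  let ?g1 = "first_half (2 * K) g" and ?g2 = "second_half (2 * K) g"
  let ?J = "symplectic_mat (2 ^ n) :: complex mat" and ?J' = "symplectic_mat K :: complex mat"
  have dims: "2 ^ (Suc n + 1) = 2 * K" "2 ^ Suc n = K" "2 * 2 ^ n = K"
    using K by simp_all
  have PF: "P \<in> carrier_mat (2 * K) K" "F \<in> carrier_mat (2 * K) K"
    unfolding P F using E1_carrier[of "Suc n"] dims by simp_all
  have J: "?J \<in> carrier_mat K K" and J': "?J' \<in> carrier_mat (2 * K) (2 * K)"
    using symplectic_mat_carrier[of "2 ^ n"] dims by simp_all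
  have "E2 (Suc n) ?g2 = - F * ?J"
    unfolding E2_Suc_eq_E1_quarter_turn[OF K] F[symmetric] using PF dims by simp
  moreover have "conj_mat (E1 (Suc n) ?g2) = ?J' * - F"
    unfolding conj_E1_Suc[OF K] F[symmetric] using PF J' by simp
  moreover have "- conj_mat (E2 (Suc n) ?g1) = ?J' * P * ?J"
  proof -
    have "conj_mat (E2 (Suc n) ?g1) = - (conj_mat (E1 (Suc n) (quarter_turn K ?g1)) * ?J)"
      unfolding E2_Suc_eq_E1_quarter_turn[OF K] conj_mat_uminus
      using conj_mat_mult[OF E1_carrier J[folded dims(2)]] by simp
    then show ?thesis
      unfolding conj_E1_Suc_quarter_turn[OF K] P by simp
  qed
  ultimately show ?thesis
    unfolding diag_block_mult_four_block_mult_diag_block[OF PF(1) uminus_carrier_mat[OF PF(2)]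
        uminus_carrier_mat[OF PF(2)] PF(1) J' J]
    unfolding E1_Suc[of "2 * K" "Suc n", OF dims(1)[symmetric]] P[symmetric] by simp
qed

lemma E1_Suc_Suc_gram_eigen:
  assumes K: "K = 2 ^ (n + 1)" and v: "v \<in> carrier_vec K" and s: "s \<in> {1, -1}"
    and H: "H = E1 (Suc n) (first_half (2 * K) g + s \<cdot>\<^sub>v quarter_turn K (second_half (2 * K) g))"
    and eig: "(mat_adjoint H * H) *\<^sub>v v = c \<cdot>\<^sub>v v"
    and w: "w = v @\<^sub>v s \<cdot>\<^sub>v (symplectic_mat (2 ^ n) *\<^sub>v v)"
  shows "(mat_adjoint (E1 (Suc (Suc n)) g) * E1 (Suc (Suc n)) g) *\<^sub>v w = c \<cdot>\<^sub>v w"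
proof -
  define P where "P = E1 (Suc n) (first_half (2 * K) g)"
  define F where "F = E1 (Suc n) (quarter_turn K (second_half (2 * K) g))"
  define X where "X = four_block_mat P (- F) (- F) P"
  define U where "U = diag_block_mat [1\<^sub>m (2 * K), symplectic_mat K :: complex mat]"
  define V where "V = diag_block_mat [1\<^sub>m K, symplectic_mat (2 ^ n) :: complex mat]"
  have dims: "2 ^ (Suc n + 1) = 2 * K" "2 ^ Suc n = K" "2 * 2 ^ n = K"
    using K by simp_all
  have PF: "P \<in> carrier_mat (2 * K) K" "- F \<in> carrier_mat (2 * K) K"
    unfolding P_def F_def using E1_carrier[of "Suc n"] dims by simp_all
  have X: "X \<in> carrier_mat (2 * K + 2 * K) (K + K)"
    unfolding X_def using four_block_carrier_mat[OF PF(1) PF(1)] .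
  have U: "U \<in> carrier_mat (2 * K + 2 * K) (2 * K + 2 * K)"
    "mat_adjoint U * U = 1\<^sub>m (2 * K + 2 * K)"
    unfolding U_def using diag_block_one_carrier diag_block_one_unitary symplectic_mat_unitary
    by (metis symplectic_mat_carrier mult_2)+
  have V: "V \<in> carrier_mat (K + K) (K + K)" "mat_adjoint V * V = 1\<^sub>m (K + K)"
    unfolding V_def dims(3)[symmetric] mult_2[symmetric]
    using diag_block_one_carrier diag_block_one_unitary symplectic_mat_unitary
    by (metis symplectic_mat_carrier mult_2)+
  have "w \<in> carrier_vec (K + K)"
    unfolding w using mult_mat_vec_carrier[OF symplectic_mat_carrier, of v "2 ^ n"] v dims by simp
  moreover have "(mat_adjoint X * X) *\<^sub>v (V *\<^sub>v w) = c \<cdot>\<^sub>v (V *\<^sub>v w)"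
  proof -
    have "H = P + s \<cdot>\<^sub>m F"
      unfolding H P_def F_def
      using E1_E2_real_linear[where c = s and n = "Suc n", unfolded dims] s by auto
    also have "\<dots> = P + (- s) \<cdot>\<^sub>m (- F)"
      by (rule arg_cong[where f = "(+) P"], rule eq_matI) auto
    finally have "(mat_adjoint (P + (- s) \<cdot>\<^sub>m (- F)) * (P + (- s) \<cdot>\<^sub>m (- F))) *\<^sub>v v = c \<cdot>\<^sub>v v"
      using eig by simp
    moreover have "V *\<^sub>v w = v @\<^sub>v (- s) \<cdot>\<^sub>v v"
      unfolding V_def w using diag_block_symplectic_mult_vec[of v "2 ^ n"] v dims by simp
    moreover have "- s \<in> {1, -1}"
      using s by auto
    ultimately show ?thesis
      unfolding X_def using block_circulant_gram_eigen[OF PF v] by simp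
  qed
  ultimately have "(mat_adjoint (U * X * V) * (U * X * V)) *\<^sub>v w = c \<cdot>\<^sub>v w"
    by (rule gram_unitary_mult_eigen[OF U V X])
  then show ?thesis
    unfolding U_def V_def X_def P_def F_def E1_Suc_Suc_factorization[OF K refl refl] .
qed

lemma T1_pow2: "T1 (2 ^ (n + 1)) h = mat_adjoint (E1 n h) * E1 n h"
proof -
  have "(THE k. (2::nat) ^ (n + 1) = 2 ^ (k + 1)) = n"
    by (rule the_equality) (simp_all add: power_inject_exp)
  then show ?thesis unfolding T1_def Ecal1_def E1_def by simp
qed

lemma T1_pow2_carrier: "T1 (2 ^ (n + 1)) h \<in> carrier_mat (2 ^ n) (2 ^ n)"
  unfolding T1_pow2
  by (rule mult_carrier_mat[OF mat_adjoint_carrier_mat_iff[THEN iffD2] E1_carrier], rule E1_carrier)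

lemma T1_eigenvector_lift:
  assumes K: "K = 2 ^ (n + 1)" and v: "v \<in> carrier_vec K" "v \<noteq> 0\<^sub>v K" and s: "s \<in> {1, -1}"
    and eig: "\<forall>h \<in> carrier_vec (2 * K). \<exists>c. eigenvector (T1 (2 * K) h) v c"
  shows "\<exists>c. eigenvector (T1 (4 * K) g) (v @\<^sub>v s \<cdot>\<^sub>v (symplectic_mat (2 ^ n) *\<^sub>v v)) c"
proof -
  let ?h = "first_half (2 * K) g + s \<cdot>\<^sub>v quarter_turn K (second_half (2 * K) g)"
  let ?w = "v @\<^sub>v s \<cdot>\<^sub>v (symplectic_mat (2 ^ n) *\<^sub>v v)"
  have T2: "2 * K = 2 ^ (Suc n + 1)" and T4: "4 * K = 2 ^ (Suc (Suc n) + 1)"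
    using K by simp_all
  have "?h \<in> carrier_vec (2 * K)" by simp
  with eig obtain c where "eigenvector (T1 (2 * K) ?h) v c" by blast
  then have "(mat_adjoint (E1 (Suc n) ?h) * E1 (Suc n) ?h) *\<^sub>v v = c \<cdot>\<^sub>v v"
    unfolding eigenvector_def T2 T1_pow2 by blast
  from E1_Suc_Suc_gram_eigen[OF K v(1) s refl this refl]
  have "T1 (4 * K) g *\<^sub>v ?w = c \<cdot>\<^sub>v ?w"
    unfolding T4 T1_pow2 .
  moreover have Jv: "symplectic_mat (2 ^ n) *\<^sub>v v \<in> carrier_vec K"
    using mult_mat_vec_carrier[OF symplectic_mat_carrier, of v "2 ^ n"] K v(1) by simp
  then have "?w \<in> carrier_vec (K + K)"
    using v(1) by simp
  moreover have "?w \<noteq> 0\<^sub>v (K + K)"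
    by (rule append_vec_nonzero[OF v]) (use Jv in simp)
  moreover have "dim_row (T1 (4 * K) g) = K + K"
    using T1_pow2_carrier[of "Suc (Suc n)" g] K unfolding T4 by simp
  ultimately show ?thesis
    unfolding eigenvector_def by auto
qed

theorem proposition5:
  fixes M m :: nat and a b :: "complex vec"
  assumes M: "M = 2 ^ m"
    and a: "a \<in> carrier_vec M" and b: "b \<in> carrier_vec M"
    and nz: "a @\<^sub>v b \<noteq> 0\<^sub>v (2 * M)"
    and eig: "\<forall>h \<in> carrier_vec (4 * M). \<exists>c. eigenvector (T1 (4 * M) h) (a @\<^sub>v b) c"
  shows "\<forall>g \<in> carrier_vec (8 * M).
           (\<exists>c. eigenvector (T1 (8 * M) g)
                  ((1 / complex_of_real (sqrt 2)) \<cdot>\<^sub>v (a @\<^sub>v b @\<^sub>v b @\<^sub>v - a)) c) \<and>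
           (\<exists>c. eigenvector (T1 (8 * M) g)
                  ((1 / complex_of_real (sqrt 2)) \<cdot>\<^sub>v (a @\<^sub>v b @\<^sub>v - b @\<^sub>v a)) c)"
proof (intro ballI conjI)
  fix g :: "complex vec"
  have K: "2 * M = 2 ^ (m + 1)" and dims: "2 * (2 * M) = 4 * M" "4 * (2 * M) = 8 * M"
    using M by simp_all
  have v: "a @\<^sub>v b \<in> carrier_vec (2 * M)" using a b by (simp add: mult_2)
  have T1_carrier: "T1 (8 * M) g \<in> carrier_mat (4 * M) (4 * M)"
    using T1_pow2_carrier[of "Suc (Suc m)" g] M by simp
  have lifted: "\<exists>c. eigenvector (T1 (8 * M) g)
      ((1 / complex_of_real (sqrt 2)) \<cdot>\<^sub>v (a @\<^sub>v b @\<^sub>v s \<cdot>\<^sub>v (b @\<^sub>v - a))) c"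
    if s: "s \<in> {1, -1}" for s
  proof -
    have "symplectic_mat (2 ^ m) *\<^sub>v (a @\<^sub>v b) = b @\<^sub>v - a"
      using symplectic_mat_mult_vec a b M by simp
    with T1_eigenvector_lift[OF K v nz s, unfolded dims, OF eig]
    obtain c where "eigenvector (T1 (8 * M) g) ((a @\<^sub>v b) @\<^sub>v s \<cdot>\<^sub>v (b @\<^sub>v - a)) c"
      by auto
    then show ?thesis
      by (intro exI[of _ c] eigenvector_smult[OF T1_carrier]) (simp_all add: append_vec_assoc)
  qed
  show "\<exists>c. eigenvector (T1 (8 * M) g)
      ((1 / complex_of_real (sqrt 2)) \<cdot>\<^sub>v (a @\<^sub>v b @\<^sub>v b @\<^sub>v - a)) c"
    using lifted[of 1] by simp
  have "(- 1) \<cdot>\<^sub>v (b @\<^sub>v - a) = - b @\<^sub>v a" by (rule eq_vecI) auto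
  then show "\<exists>c. eigenvector (T1 (8 * M) g)
      ((1 / complex_of_real (sqrt 2)) \<cdot>\<^sub>v (a @\<^sub>v b @\<^sub>v - b @\<^sub>v a)) c"
    using lifted[of "- 1"] by simp
qed

end
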